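(* Let $h>0$, $k\in\{0,1,2,\dots\}$, $\alpha\in(0,1]$, $c>0$, and let $F:\mathbb R\to\mathbb R$ be a non-zero $2\pi$-periodic function whose $k$th derivative exists and is Hölder continuous of order $\alpha$ with coefficient $c$ (i.e. $|F^{(k)}(x)-F^{(k)}(x')|\le c|x-x'|^\alpha$). Set $s:=k+\alpha$. Then for all sufficiently small $\epsilon>0$, $$\log\mathcal A^{A_h}_\epsilon(F)\le Ch\left(\frac{12c}\epsilon\right)^{1/s},$$ where $C$ is a universal constant.
   Context: For $h>0$, $A_h$ is the space of real-valued $2\pi$-periodic functions on $\mathbb R$ admitting a bounded analytic continuation to $\{z\in\mathbb C:|\operatorname{Im}z|\le h\}$, normed by the supremum of the absolute value of the continuation on that strip. Approachability: $\mathcal A^{A_h}_\epsilon(F):=\inf\{\|F^*\|_{A_h}:F^*\in A_h,\ \sup_{x\in\mathbb R}|F(x)-F^*(x)|\le\epsilon\}$. $\log=\log_2$. *)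

theory Defs
  imports "HOL-Complex_Analysis.Complex_Analysis"
begin

definition strip :: "real \<Rightarrow> complex set" where
  "strip h = {z. \<bar>Im z\<bar> \<le> h}"

definition periodic_2pi :: "(real \<Rightarrow> real) \<Rightarrow> bool" where
  "periodic_2pi F \<longleftrightarrow> (\<forall>x. F (x + 2 * pi) = F x)"

definition is_strip_continuation :: "real \<Rightarrow> (real \<Rightarrow> real) \<Rightarrow> (complex \<Rightarrow> complex) \<Rightarrow> bool" where
  "is_strip_continuation h F G \<longleftrightarrow>
     G analytic_on strip h \<and> bounded (G ` strip h) \<and> (\<forall>x. G (complex_of_real x) = complex_of_real (F x))"

definition in_A :: "real \<Rightarrow> (real \<Rightarrow> real) \<Rightarrow> bool" where
  "in_A h F \<longleftrightarrow> periodic_2pi F \<and> (\<exists>G. is_strip_continuation h F G)"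

text \<open>The norm of A_h: sup of the modulus of the (unique) continuation on the strip.\<close>
definition A_norm :: "real \<Rightarrow> (real \<Rightarrow> real) \<Rightarrow> real" where
  "A_norm h F = Inf {Sup ((\<lambda>z. norm (G z)) ` strip h) | G. is_strip_continuation h F G}"

definition approachability :: "real \<Rightarrow> real \<Rightarrow> (real \<Rightarrow> real) \<Rightarrow> real" where
  "approachability h \<epsilon> F =
     Inf {A_norm h Fs | Fs. in_A h Fs \<and> (\<forall>x. \<bar>F x - Fs x\<bar> \<le> \<epsilon>)}"

end

theory Submission
  imports Defs "HOL-Real_Asymp.Real_Asymp"
begin

text \<open>
  The Jackson kernel \<open>J_q\<close>, the normalised square of the Fejer kernel, is a cosine polynomial of
  degree \<open>2q\<close> with coefficient sum \<open>O(q)\<close>. Convolving a continuous periodic \<open>f\<close> with it therefore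
  gives a trigonometric polynomial \<open>T_q f\<close> whose entire extension is bounded by
  \<open>O(q sup |f| exp (2qh))\<close> on the strip \<open>|Im z| \<le> h\<close>. As \<open>J_q\<close> has first moment \<open>O(1/q)\<close>, the
  residual \<open>R_q = I - T_q\<close>, which commutes with differentiation, gains a factor \<open>O(1/q)\<close> for
  each derivative of \<open>f\<close> and \<open>O(q^-\<alpha>)\<close> from the Holder condition on the last one. So
  \<open>F - R_q^(k+1) F\<close>, a sum of \<open>k + 1\<close> such trigonometric polynomials, is within \<open>O(q^-(k+\<alpha>))\<close>
  of \<open>F\<close> and bounded by \<open>O(q 2^k exp (2qh))\<close> on the strip; \<open>q\<close> of order \<open>(c/\<epsilon>)^(1/(k+\<alpha>))\<close>
  gives the bound.
\<close>

section \<open>Cosine polynomials with bounded coefficient sum\<close>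

definition cos_poly :: "nat \<Rightarrow> real \<Rightarrow> (real \<Rightarrow> real) \<Rightarrow> bool" where
  "cos_poly N S f \<longleftrightarrow>
     (\<exists>b. (\<forall>u. f u = (\<Sum>n\<le>N. b n * cos (real n * u))) \<and> (\<Sum>n\<le>N. \<bar>b n\<bar>) \<le> S)"

lemma cos_poly_nonneg: "cos_poly N S f \<Longrightarrow> 0 \<le> S"
  unfolding cos_poly_def by (meson order_trans sum_nonneg abs_ge_zero)

lemma cos_poly_abs_le: "cos_poly N S f \<Longrightarrow> \<bar>f u\<bar> \<le> S"
  unfolding cos_poly_def
proof (elim exE conjE)
  fix b assume f: "\<forall>u. f u = (\<Sum>n\<le>N. b n * cos (real n * u))" and S: "(\<Sum>n\<le>N. \<bar>b n\<bar>) \<le> S"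
  have "\<bar>f u\<bar> \<le> (\<Sum>n\<le>N. \<bar>b n * cos (real n * u)\<bar>)" using f sum_abs by metis
  also have "\<dots> \<le> (\<Sum>n\<le>N. \<bar>b n\<bar>)"
    by (intro sum_mono) (auto simp: abs_mult intro!: mult_left_le)
  finally show ?thesis using S by linarith
qed

lemma cos_poly_periodic:
  assumes "cos_poly N S f" shows "f (u + 2 * pi) = f u"
proof -
  have "cos (real n * (u + 2 * pi)) = cos (real n * u)" for n
    using cos.plus_of_nat[of "real n * u" n] by (simp add: algebra_simps)
  then show ?thesis using assms unfolding cos_poly_def by auto
qed

lemma cos_poly_mono:
  assumes "cos_poly N S f" "N \<le> N'" "S \<le> S'" shows "cos_poly N' S' f"
proof -
  obtain b where b: "\<forall>u. f u = (\<Sum>n\<le>N. b n * cos (real n * u))" "(\<Sum>n\<le>N. \<bar>b n\<bar>) \<le> S"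
    using assms(1) unfolding cos_poly_def by blast
  define b' where "b' n = (if n \<le> N then b n else 0)" for n
  have sub: "{..N} \<subseteq> {..N'}" using assms(2) by auto
  have "(\<Sum>n\<le>N'. b' n * cos (real n * u)) = (\<Sum>n\<le>N. b n * cos (real n * u))" for u
    by (rule sum.mono_neutral_cong_right) (use sub in \<open>auto simp: b'_def\<close>)
  moreover have "(\<Sum>n\<le>N'. \<bar>b' n\<bar>) = (\<Sum>n\<le>N. \<bar>b n\<bar>)"
    by (rule sum.mono_neutral_cong_right) (use sub in \<open>auto simp: b'_def\<close>)
  ultimately show ?thesis
    unfolding cos_poly_def using b assms(3) by (intro exI[of _ b']) auto
qed

lemma cos_poly_zero: "cos_poly N 0 (\<lambda>u. 0)"
  unfolding cos_poly_def by (rule exI[of _ "\<lambda>n. 0"]) simp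

lemma cos_poly_cos: "n \<le> N \<Longrightarrow> cos_poly N \<bar>a\<bar> (\<lambda>u. a * cos (real n * u))"
  unfolding cos_poly_def
  by (rule exI[of _ "\<lambda>m. of_bool (m = n) * a"]) (simp add: mult.assoc abs_mult)

lemma cos_poly_add:
  assumes "cos_poly N S1 f" "cos_poly N S2 g" shows "cos_poly N (S1 + S2) (\<lambda>u. f u + g u)"
proof -
  obtain b where b: "\<forall>u. f u = (\<Sum>n\<le>N. b n * cos (real n * u))" "(\<Sum>n\<le>N. \<bar>b n\<bar>) \<le> S1"
    using assms(1) unfolding cos_poly_def by blast
  obtain c where c: "\<forall>u. g u = (\<Sum>n\<le>N. c n * cos (real n * u))" "(\<Sum>n\<le>N. \<bar>c n\<bar>) \<le> S2"
    using assms(2) unfolding cos_poly_def by blast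
  have "(\<Sum>n\<le>N. \<bar>b n + c n\<bar>) \<le> (\<Sum>n\<le>N. \<bar>b n\<bar> + \<bar>c n\<bar>)" by (intro sum_mono) auto
  also have "\<dots> \<le> S1 + S2" using b c by (simp add: sum.distrib)
  finally show ?thesis unfolding cos_poly_def
    by (intro exI[of _ "\<lambda>n. b n + c n"]) (use b c in \<open>auto simp: sum.distrib algebra_simps\<close>)
qed

lemma cos_poly_sum:
  assumes "finite A" "\<And>i. i \<in> A \<Longrightarrow> cos_poly N (S i) (f i)"
  shows "cos_poly N (\<Sum>i\<in>A. S i) (\<lambda>u. \<Sum>i\<in>A. f i u)"
  using assms
proof (induction A rule: finite_induct)
  case empty then show ?case using cos_poly_zero by simp
next
  case (insert x F)
  then show ?case using cos_poly_add[of N "S x" "f x" "sum S F" "\<lambda>u. \<Sum>i\<in>F. f i u"] by simp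
qed

lemma cos_poly_cmult:
  assumes "cos_poly N S f" shows "cos_poly N (\<bar>a\<bar> * S) (\<lambda>u. a * f u)"
proof -
  obtain b where b: "\<forall>u. f u = (\<Sum>n\<le>N. b n * cos (real n * u))" "(\<Sum>n\<le>N. \<bar>b n\<bar>) \<le> S"
    using assms(1) unfolding cos_poly_def by blast
  have "(\<Sum>n\<le>N. \<bar>a * b n\<bar>) \<le> \<bar>a\<bar> * S"
    using b(2) by (simp add: abs_mult flip: sum_distrib_left) (simp add: mult_left_mono)
  then show ?thesis unfolding cos_poly_def
    by (intro exI[of _ "\<lambda>n. a * b n"]) (use b in \<open>auto simp: sum_distrib_left algebra_simps\<close>)
qed

lemma cos_mult_cos_nat:
  "cos (real n * u) * cos (real m * u) =
     (cos (real (n + m) * u) + cos (real (if n \<le> m then m - n else n - m) * u)) / 2"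
proof -
  have "cos (real n * u - real m * u) = cos (real (if n \<le> m then m - n else n - m) * u)"
  proof (cases "n \<le> m")
    case True
    then have "real n * u - real m * u = - (real (m - n) * u)" by (simp add: of_nat_diff algebra_simps)
    then show ?thesis using True by (simp only: cos_minus) simp
  next
    case False
    then show ?thesis by (simp add: of_nat_diff algebra_simps)
  qed
  then show ?thesis
    by (simp add: cos_times_cos distrib_right add.commute)
qed

lemma cos_poly_mult:
  assumes "cos_poly N1 S1 f" "cos_poly N2 S2 g" shows "cos_poly (N1 + N2) (S1 * S2) (\<lambda>u. f u * g u)"
proof -
  obtain b where b: "\<forall>u. f u = (\<Sum>n\<le>N1. b n * cos (real n * u))" "(\<Sum>n\<le>N1. \<bar>b n\<bar>) \<le> S1"
    using assms(1) unfolding cos_poly_def by blast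
  obtain c where c: "\<forall>u. g u = (\<Sum>m\<le>N2. c m * cos (real m * u))" "(\<Sum>m\<le>N2. \<bar>c m\<bar>) \<le> S2"
    using assms(2) unfolding cos_poly_def by blast
  define t where "t n m u = (b n * c m) / 2 * cos (real (n + m) * u)
       + (b n * c m) / 2 * cos (real (if n \<le> m then m - n else n - m) * u)" for n m u
  have fg: "f u * g u = (\<Sum>n\<le>N1. \<Sum>m\<le>N2. t n m u)" for u
  proof -
    have "f u * g u = (\<Sum>n\<le>N1. \<Sum>m\<le>N2. (b n * c m) * (cos (real n * u) * cos (real m * u)))"
      using b(1) c(1) by (simp add: sum_product mult_ac)
    then show ?thesis
      by (simp add: t_def cos_mult_cos_nat ring_distribs add_divide_distrib del: of_nat_add)
  qed
  have "cos_poly (N1 + N2) (\<bar>b n * c m / 2\<bar> + \<bar>b n * c m / 2\<bar>) (t n m)"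
    if "n \<le> N1" "m \<le> N2" for n m
    unfolding t_def[abs_def] using that by (intro cos_poly_add cos_poly_cos) auto
  then have "cos_poly (N1 + N2) (\<bar>b n\<bar> * \<bar>c m\<bar>) (t n m)" if "n \<le> N1" "m \<le> N2" for n m
    using that by (simp add: abs_mult)
  then have "cos_poly (N1 + N2) (\<Sum>n\<le>N1. \<Sum>m\<le>N2. \<bar>b n\<bar> * \<bar>c m\<bar>) (\<lambda>u. f u * g u)"
    unfolding fg by (intro cos_poly_sum) auto
  moreover have "(\<Sum>n\<le>N1. \<Sum>m\<le>N2. \<bar>b n\<bar> * \<bar>c m\<bar>) \<le> S1 * S2"
    using b(2) c(2) cos_poly_nonneg[OF assms(1)]
    by (simp add: sum_product[symmetric]) (intro mult_mono; simp add: sum_nonneg)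
  ultimately show ?thesis using cos_poly_mono by blast
qed

section \<open>The Fejer and Jackson kernels\<close>

definition dirichlet_kernel :: "nat \<Rightarrow> real \<Rightarrow> real" where
  "dirichlet_kernel j u = 1 + 2 * (\<Sum>l\<in>{1..j}. cos (real l * u))"

text \<open>The Fejer kernel without its factor \<open>1 / q\<close>, so that \<open>fejer_kernel q 0 = q\<^sup>2\<close>.\<close>
definition fejer_kernel :: "nat \<Rightarrow> real \<Rightarrow> real" where
  "fejer_kernel q u = (\<Sum>j<q. dirichlet_kernel j u)"

lemma sum_lessThan_odd: "(\<Sum>j<q. 2 * real j + 1) = real q ^ 2"
  by (induction q) (auto simp: power2_eq_square algebra_simps)

lemma cos_poly_dirichlet_kernel: "cos_poly j (2 * real j + 1) (dirichlet_kernel j)"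
proof -
  have "cos_poly j (\<Sum>l\<in>{1..j}. \<bar>2\<bar>) (\<lambda>u. \<Sum>l\<in>{1..j}. 2 * cos (real l * u))"
    by (intro cos_poly_sum cos_poly_cos) auto
  from cos_poly_add[OF cos_poly_cos[of 0 j 1] this] show ?thesis
    unfolding dirichlet_kernel_def by (simp add: sum_distrib_left algebra_simps)
qed

lemma cos_poly_fejer_kernel: "cos_poly q (real q ^ 2) (fejer_kernel q)"
proof -
  have "cos_poly q (\<Sum>j<q. 2 * real j + 1) (\<lambda>u. \<Sum>j<q. dirichlet_kernel j u)"
    by (intro cos_poly_sum cos_poly_mono[OF cos_poly_dirichlet_kernel]) auto
  then show ?thesis unfolding fejer_kernel_def[abs_def] sum_lessThan_odd .
qed

lemma dirichlet_kernel_mult_one_minus_cos: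
  "dirichlet_kernel j u * (1 - cos u) = cos (real j * u) - cos (real (Suc j) * u)"
proof (induction j)
  case 0 then show ?case by (simp add: dirichlet_kernel_def)
next
  case (Suc j)
  have "dirichlet_kernel (Suc j) u = dirichlet_kernel j u + 2 * cos (real (Suc j) * u)"
    unfolding dirichlet_kernel_def by simp
  moreover have "cos (real (Suc (Suc j)) * u) = cos (real (Suc j) * u + u)"
    "cos (real j * u) = cos (real (Suc j) * u - u)" by (simp_all add: algebra_simps)
  ultimately show ?case
    using Suc by (simp only: cos_add cos_diff) (simp add: algebra_simps)
qed

lemma fejer_kernel_mult_one_minus_cos: "fejer_kernel q u * (1 - cos u) = 1 - cos (real q * u)"
  unfolding fejer_kernel_def sum_distrib_right dirichlet_kernel_mult_one_minus_cos
  using sum_lessThan_telescope'[of "\<lambda>j. cos (real j * u)" q] by simp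

lemma one_minus_cos_le: "1 - cos u \<le> (u::real) ^ 2 / 2"
proof -
  have "1 - cos u = 2 * sin (u/2) ^ 2" using cos_double_sin[of "u/2"] by simp
  also have "\<dots> \<le> 2 * (u/2) ^ 2"
    using abs_sin_x_le_abs_x[of "u/2"] by (metis abs_ge_zero power2_abs power_mono mult_left_mono zero_le_numeral)
  finally show ?thesis by (simp add: power2_eq_square)
qed

lemma sin_ge_cubic: "0 \<le> (x::real) \<Longrightarrow> x - x ^ 3 / 6 \<le> sin x"
proof -
  assume x: "0 \<le> x"
  have "\<bar>sin x - (\<Sum>m<3. sin_coeff m * x ^ m)\<bar> \<le> inverse (fact 3) * \<bar>x\<bar> ^ 3"
    by (rule Maclaurin_sin_bound)
  moreover have "(\<Sum>m<3. sin_coeff m * x ^ m) = x"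
    by (simp add: sin_coeff_def numeral_3_eq_3 lessThan_Suc)
  ultimately have "\<bar>sin x - x\<bar> \<le> x ^ 3 / 6" using x by (simp add: fact_numeral)
  then show ?thesis by linarith
qed

lemma one_minus_cos_ge:
  assumes "\<bar>u\<bar> \<le> pi" shows "u ^ 2 / 8 \<le> 1 - cos u"
proof -
  define t where "t = \<bar>u\<bar> / 2"
  have t0: "0 \<le> t" and t1: "t \<le> pi / 2" using assms by (auto simp: t_def)
  have "t ^ 2 \<le> (pi / 2) ^ 2" using t0 t1 by (intro power_mono) auto
  also have "\<dots> \<le> 3"
  proof -
    have "pi \<le> 16 / 5" using pi_approx by simp
    then have "pi * pi \<le> 16 / 5 * (16 / 5)" by (intro mult_mono) auto
    then show ?thesis by (simp add: power2_eq_square)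
  qed
  finally have "t * t ^ 2 \<le> t * 3" using t0 by (rule mult_left_mono)
  then have "t / 2 \<le> sin t" using sin_ge_cubic[OF t0] by (simp add: power3_eq_cube power2_eq_square)
  then have "(t / 2) ^ 2 \<le> sin t ^ 2" using t0 by (intro power_mono) auto
  moreover have "sin t ^ 2 = sin (u / 2) ^ 2"
    by (cases "u \<ge> 0") (auto simp: t_def)
  moreover have "1 - cos u = 2 * sin (u / 2) ^ 2" using cos_double_sin[of "u / 2"] by simp
  moreover have "(t / 2) ^ 2 = u ^ 2 / 16" by (simp add: t_def power2_eq_square)
  ultimately show ?thesis by simp
qed

lemma fejer_kernel_abs_le: "\<bar>fejer_kernel q u\<bar> \<le> real q ^ 2"
  using cos_poly_abs_le[OF cos_poly_fejer_kernel] .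

lemma fejer_kernel_decay:
  assumes "\<bar>u\<bar> \<le> pi" "q \<ge> 1"
  shows "\<bar>fejer_kernel q u\<bar> \<le> 32 * real q ^ 2 / (1 + real q ^ 2 * u ^ 2)"
proof -
  define Q where "Q = real q ^ 2"
  have Q: "Q \<ge> 1" using assms(2) by (simp add: Q_def)
  have B2: "\<bar>fejer_kernel q u\<bar> \<le> Q" unfolding Q_def by (rule fejer_kernel_abs_le)
  have d: "0 < 1 + Q * u ^ 2" using Q by (simp add: add_pos_nonneg)
  have "\<bar>fejer_kernel q u\<bar> * (1 + Q * u ^ 2) \<le> 32 * Q"
  proof (cases "Q * u ^ 2 \<le> 1")
    case True
    have "\<bar>fejer_kernel q u\<bar> * (1 + Q * u ^ 2) \<le> Q * 2"
      by (rule mult_mono) (use B2 True Q in auto)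
    also have "\<dots> \<le> 32 * Q" using Q by simp
    finally show ?thesis .
  next
    case False
    have lo: "u ^ 2 / 8 \<le> 1 - cos u" using one_minus_cos_ge[OF assms(1)] .
    have "0 < u ^ 2 / 8" using False by (cases "u = 0") auto
    then have pos: "0 < 1 - cos u" using lo by linarith
    have "\<bar>fejer_kernel q u\<bar> * (u ^ 2 / 8) \<le> \<bar>fejer_kernel q u\<bar> * (1 - cos u)"
      by (rule mult_left_mono) (use lo in auto)
    also have "\<dots> = \<bar>fejer_kernel q u * (1 - cos u)\<bar>" using pos by (simp add: abs_mult)
    also have "\<dots> = \<bar>1 - cos (real q * u)\<bar>" by (simp only: fejer_kernel_mult_one_minus_cos)
    also have "\<dots> \<le> 2" by (simp add: abs_le_iff)
    finally have P16: "\<bar>fejer_kernel q u\<bar> * u ^ 2 \<le> 16" by simp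
    have "\<bar>fejer_kernel q u\<bar> * (1 + Q * u ^ 2) \<le> \<bar>fejer_kernel q u\<bar> * (2 * Q * u ^ 2)"
      using False by (intro mult_left_mono) auto
    also have "\<dots> = 2 * Q * (\<bar>fejer_kernel q u\<bar> * u ^ 2)" by simp
    also have "\<dots> \<le> 2 * Q * 16" using P16 Q by (intro mult_left_mono) auto
    finally show ?thesis by simp
  qed
  then have "\<bar>fejer_kernel q u\<bar> \<le> 32 * Q / (1 + Q * u ^ 2)" using d by (simp add: pos_le_divide_eq)
  then show ?thesis unfolding Q_def .
qed

lemma fejer_kernel_ge:
  assumes "\<bar>u\<bar> \<le> 1 / real q" "q \<ge> 1" shows "real q ^ 2 / 4 \<le> fejer_kernel q u"
proof (cases "u = 0")
  case True
  have "dirichlet_kernel j 0 = 2 * real j + 1" for j unfolding dirichlet_kernel_def by simp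
  then show ?thesis using True sum_lessThan_odd by (simp add: fejer_kernel_def)
next
  case False
  have q1: "real q \<ge> 1" using assms(2) by simp
  have "\<bar>real q * u\<bar> \<le> 1" using assms q1 by (simp add: abs_mult field_simps)
  then have lo: "(real q * u) ^ 2 / 8 \<le> 1 - cos (real q * u)"
    using pi_gt3 by (intro one_minus_cos_ge) linarith
  have "1 / real q \<le> 1" using q1 by simp
  then have "\<bar>u\<bar> \<le> pi" using assms(1) pi_gt3 by linarith
  moreover have "0 < u ^ 2 / 8" using False by simp
  ultimately have pos: "0 < 1 - cos u" using one_minus_cos_ge[of u] by linarith
  have "fejer_kernel q u = (1 - cos (real q * u)) / (1 - cos u)"
    using fejer_kernel_mult_one_minus_cos[of q u] pos by (simp add: field_simps)
  also have "\<dots> \<ge> ((real q * u) ^ 2 / 8) / (u ^ 2 / 2)"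
    using lo one_minus_cos_le[of u] pos by (intro frac_le) auto
  finally show ?thesis using False by (simp add: power_mult_distrib field_simps)
qed

lemma continuous_on_fejer_kernel [continuous_intros]: "continuous_on S (fejer_kernel q)"
  unfolding fejer_kernel_def[abs_def] dirichlet_kernel_def by (intro continuous_intros)

lemma integral_fejer_kernel_sq_ge:
  assumes "q \<ge> 1" shows "real q ^ 3 / 8 \<le> integral {-pi..pi} (\<lambda>u. fejer_kernel q u ^ 2)"
proof -
  have q1: "real q \<ge> 1" using assms by simp
  have "1 / real q \<le> 1" using q1 by simp
  then have sub: "{-(1 / real q)..1 / real q} \<subseteq> {-pi..pi}"
    using pi_gt3 by auto
  have "real q ^ 3 / 8 = integral {-(1 / real q)..1 / real q} (\<lambda>u. (real q ^ 2 / 4) ^ 2)"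
    using q1 by (simp add: field_simps power2_eq_square power3_eq_cube)
  also have "\<dots> \<le> integral {-(1 / real q)..1 / real q} (\<lambda>u. fejer_kernel q u ^ 2)"
    using fejer_kernel_ge[OF _ assms]
    by (intro integral_le integrable_continuous_real continuous_intros power_mono) auto
  also have "\<dots> \<le> integral {-pi..pi} (\<lambda>u. fejer_kernel q u ^ 2)"
    by (rule integral_subset_le[OF sub]) (auto intro!: integrable_continuous_real continuous_intros)
  finally show ?thesis .
qed

lemma integral_rational_decay_le:
  fixes q :: real
  shows "integral {0..pi} (\<lambda>u. q ^ 4 * u / (1 + q ^ 2 * u ^ 2) ^ 2) \<le> q ^ 2 / 2"
proof -
  define G where "G u = - (q ^ 2 / 2) / (1 + q ^ 2 * u ^ 2)" for u
  have pos: "0 < 1 + q ^ 2 * u ^ 2" for u by (simp add: add_pos_nonneg)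
  have "(G has_real_derivative q ^ 4 * u / (1 + q ^ 2 * u ^ 2) ^ 2) (at u)" for u
    unfolding G_def using pos[of u]
    by (auto intro!: derivative_eq_intros simp: divide_simps power2_eq_square power4_eq_xxxx)
      (simp add: algebra_simps)
  then have "((\<lambda>u. q ^ 4 * u / (1 + q ^ 2 * u ^ 2) ^ 2) has_integral (G pi - G 0)) {0..pi}"
    by (intro fundamental_theorem_of_calculus)
      (auto simp: has_real_derivative_iff_has_vector_derivative has_vector_derivative_at_within)
  moreover have "G pi \<le> 0" unfolding G_def using pos[of pi] by (simp add: divide_nonpos_pos)
  ultimately show ?thesis by (simp add: integral_unique G_def)
qed

lemma integral_fejer_kernel_sq_moment_le:
  assumes "q \<ge> 1"
  shows "integral {-pi..pi} (\<lambda>u. fejer_kernel q u ^ 2 * \<bar>u\<bar>) \<le> 1024 * real q ^ 2"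
proof -
  define Q where "Q = real q"
  have Q: "Q \<ge> 1" using assms by (simp add: Q_def)
  define g where "g u = 1024 * (Q ^ 4 * \<bar>u\<bar> / (1 + Q ^ 2 * u ^ 2) ^ 2)" for u
  have pos: "0 < 1 + Q ^ 2 * u ^ 2" for u by (simp add: add_pos_nonneg)
  have gc: "continuous_on S g" for S unfolding g_def using pos
    by (intro continuous_intros) (metis less_irrefl power_not_zero)
  have le: "fejer_kernel q u ^ 2 * \<bar>u\<bar> \<le> g u" if "u \<in> {-pi..pi}" for u
  proof -
    have "\<bar>fejer_kernel q u\<bar> \<le> 32 * Q ^ 2 / (1 + Q ^ 2 * u ^ 2)"
      using fejer_kernel_decay[of u q] that assms by (auto simp: Q_def)
    then have "\<bar>fejer_kernel q u\<bar> ^ 2 * \<bar>u\<bar> \<le> (32 * Q ^ 2 / (1 + Q ^ 2 * u ^ 2)) ^ 2 * \<bar>u\<bar>"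
      by (intro mult_right_mono power_mono) auto
    also have "\<dots> = g u" by (simp add: g_def power_divide power_mult_distrib field_simps)
    finally show ?thesis by simp
  qed
  have "integral {-pi..pi} (\<lambda>u. fejer_kernel q u ^ 2 * \<bar>u\<bar>) \<le> integral {-pi..pi} g"
    using le by (intro integral_le integrable_continuous_real continuous_intros gc) auto
  also have "\<dots> = integral {-pi..0} g + integral {0..pi} g"
    using Henstock_Kurzweil_Integration.integral_combine[of "-pi" 0 pi g] integrable_continuous_real[OF gc] by auto
  also have "integral {-pi..0} g = integral {0..pi} g"
  proof -
    have "(\<lambda>u. g (- u)) = g" by (simp add: g_def[abs_def])
    then show ?thesis using Henstock_Kurzweil_Integration.integral_reflect_real[of pi 0 g] by simp
  qed
  also have "integral {0..pi} g = 1024 * integral {0..pi} (\<lambda>u. Q ^ 4 * u / (1 + Q ^ 2 * u ^ 2) ^ 2)"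
    by (subst Henstock_Kurzweil_Integration.integral_mult_right[symmetric], rule integral_cong) (auto simp: g_def)
  also have "\<dots> \<le> 1024 * (Q ^ 2 / 2)" using integral_rational_decay_le[of Q] by linarith
  finally show ?thesis by (simp add: Q_def)
qed

definition jackson_const :: "nat \<Rightarrow> real" where
  "jackson_const q = integral {-pi..pi} (\<lambda>u. fejer_kernel q u ^ 2) / (2 * pi)"

definition jackson_kernel :: "nat \<Rightarrow> real \<Rightarrow> real" where
  "jackson_kernel q u = fejer_kernel q u ^ 2 / jackson_const q"

lemma jackson_const_ge: "q \<ge> 1 \<Longrightarrow> real q ^ 3 / (16 * pi) \<le> jackson_const q"
  unfolding jackson_const_def using integral_fejer_kernel_sq_ge[of q]
  by (simp add: divide_right_mono flip: divide_divide_eq_left)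

lemma jackson_const_pos: "q \<ge> 1 \<Longrightarrow> 0 < jackson_const q"
proof -
  assume q: "q \<ge> 1"
  then have "0 < real q ^ 3 / (16 * pi)" by simp
  then show ?thesis using jackson_const_ge[OF q] by linarith
qed

lemma jackson_kernel_nonneg: "q \<ge> 1 \<Longrightarrow> 0 \<le> jackson_kernel q u"
  unfolding jackson_kernel_def using jackson_const_pos[of q] by simp

lemma continuous_on_jackson_kernel [continuous_intros]: "continuous_on S (jackson_kernel q)"
  unfolding jackson_kernel_def[abs_def] divide_inverse by (intro continuous_intros)

lemma integral_jackson_kernel: "q \<ge> 1 \<Longrightarrow> integral {-pi..pi} (jackson_kernel q) = 2 * pi"
proof -
  assume q: "q \<ge> 1"
  have "integral {-pi..pi} (jackson_kernel q)
      = integral {-pi..pi} (\<lambda>u. fejer_kernel q u ^ 2) / jackson_const q"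
    unfolding jackson_kernel_def[abs_def] by (rule Henstock_Kurzweil_Integration.integral_divide)
  also have "integral {-pi..pi} (\<lambda>u. fejer_kernel q u ^ 2) = 2 * pi * jackson_const q"
    by (simp add: jackson_const_def)
  finally show ?thesis using jackson_const_pos[OF q] by simp
qed

lemma integral_jackson_kernel_moment_le:
  assumes "q \<ge> 1"
  shows "integral {-pi..pi} (\<lambda>u. jackson_kernel q u * \<bar>u\<bar>) / (2 * pi) \<le> 8192 / real q"
proof -
  have zp: "0 < jackson_const q" by (rule jackson_const_pos[OF assms])
  have q1: "real q \<ge> 1" using assms by simp
  have "integral {-pi..pi} (\<lambda>u. jackson_kernel q u * \<bar>u\<bar>) / (2 * pi)
      = integral {-pi..pi} (\<lambda>u. fejer_kernel q u ^ 2 * \<bar>u\<bar>) / (2 * pi * jackson_const q)"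
    by (simp add: jackson_kernel_def)
  also have "\<dots> \<le> 1024 * real q ^ 2 / (2 * pi * jackson_const q)"
    using integral_fejer_kernel_sq_moment_le[OF assms] zp by (intro divide_right_mono) auto
  also have "\<dots> \<le> 1024 * real q ^ 2 / (real q ^ 3 / 8)"
  proof (rule divide_left_mono)
    show "real q ^ 3 / 8 \<le> 2 * pi * jackson_const q"
      using integral_fejer_kernel_sq_ge[OF assms] by (simp add: jackson_const_def)
    show "0 < 2 * pi * jackson_const q * (real q ^ 3 / 8)" using zp q1 by simp
  qed simp
  also have "\<dots> = 8192 / real q" using q1 by (simp add: field_simps power2_eq_square power3_eq_cube)
  finally show ?thesis .
qed

lemma cos_poly_jackson_kernel:
  assumes "q \<ge> 1" shows "cos_poly (2 * q) (16 * pi * real q) (jackson_kernel q)"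
proof -
  have zp: "0 < jackson_const q" by (rule jackson_const_pos[OF assms])
  have q1: "real q \<ge> 1" using assms by simp
  have "cos_poly (q + q) (\<bar>1 / jackson_const q\<bar> * (real q ^ 2 * real q ^ 2))
          (\<lambda>u. 1 / jackson_const q * (fejer_kernel q u * fejer_kernel q u))"
    by (intro cos_poly_cmult cos_poly_mult cos_poly_fejer_kernel)
  moreover have "\<bar>1 / jackson_const q\<bar> * (real q ^ 2 * real q ^ 2) = real q ^ 4 / jackson_const q"
    using zp by simp
  moreover have "real q ^ 4 / jackson_const q \<le> real q ^ 4 / (real q ^ 3 / (16 * pi))"
    using jackson_const_ge[OF assms] zp q1 by (intro divide_left_mono) auto
  moreover have "real q ^ 4 / (real q ^ 3 / (16 * pi)) = 16 * pi * real q"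
    using q1 by (simp add: field_simps power3_eq_cube power4_eq_xxxx)
  moreover have "(\<lambda>u. 1 / jackson_const q * (fejer_kernel q u * fejer_kernel q u)) = jackson_kernel q"
    by (auto simp: jackson_kernel_def power2_eq_square)
  ultimately show ?thesis by (metis cos_poly_mono mult_2 order_refl)
qed

section \<open>Periodic functions\<close>

definition cont_periodic_2pi :: "(real \<Rightarrow> real) \<Rightarrow> bool" where
  "cont_periodic_2pi f \<longleftrightarrow> continuous_on UNIV f \<and> periodic_2pi f"

lemma periodic_2pi_add_int:
  assumes "periodic_2pi f" shows "f (x + 2 * pi * of_int n) = f x"
proof (induction n rule: int_induct[where k = 0])
  case (step1 i)
  then show ?case
    using assms unfolding periodic_2pi_def by (metis add.assoc distrib_left mult.right_neutral of_int_add of_int_1)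
next
  case (step2 i)
  have "f (x + 2 * pi * of_int (i - 1)) = f (x + 2 * pi * of_int (i - 1) + 2 * pi)"
    using assms unfolding periodic_2pi_def by simp
  then show ?case using step2 by (simp add: algebra_simps)
qed simp

lemma exists_int_shift_in_period: "\<exists>n::int. x - 2 * pi * of_int n \<in> {-pi..pi}"
proof -
  define n where "n = \<lfloor>(x + pi) / (2 * pi)\<rfloor>"
  have "of_int n \<le> (x + pi) / (2 * pi)" "(x + pi) / (2 * pi) < of_int n + 1"
    unfolding n_def by linarith+
  then have "2 * pi * of_int n \<le> x + pi" "x + pi < 2 * pi * of_int n + 2 * pi"
    by (simp_all add: field_simps)
  then show ?thesis by (intro exI[of _ n]) auto
qed

lemma bounded_periodic_2pi:
  assumes c: "continuous_on UNIV f" and p: "periodic_2pi f"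
  shows "\<exists>B. \<forall>x. \<bar>f x\<bar> \<le> B"
proof -
  have "compact (f ` {-pi..pi})" by (rule compact_continuous_image) (use c continuous_on_subset in auto)
  then obtain B where B: "\<forall>y\<in>f ` {-pi..pi}. norm y \<le> B" using compact_imp_bounded bounded_iff by metis
  have "\<bar>f x\<bar> \<le> B" for x
  proof -
    obtain n :: int where n: "x - 2 * pi * of_int n \<in> {-pi..pi}" using exists_int_shift_in_period by blast
    have "f x = f (x - 2 * pi * of_int n)" using periodic_2pi_add_int[OF p, of "x - 2 * pi * of_int n" n] by simp
    then show ?thesis using B n by auto
  qed
  then show ?thesis by blast
qed

lemma integral_periodic_2pi_shift:
  assumes c: "continuous_on UNIV f" and p: "periodic_2pi f"
  shows "integral {a..a + 2 * pi} f = integral {-pi..pi} (f :: real \<Rightarrow> real)"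
proof -
  have int: "f integrable_on {s..t}" for s t
    by (rule integrable_continuous_real) (use c continuous_on_subset in auto)
  have shift: "integral {s + 2 * pi * of_int n..t + 2 * pi * of_int n} f = integral {s..t} f" for s t n
    using integral_shift_real_ivl[where a = "s + 2 * pi * of_int n" and b = "t + 2 * pi * of_int n"
        and c = "2 * pi * of_int n" and f = f] periodic_2pi_add_int[OF p] by simp
  obtain n :: int where n: "a - 2 * pi * of_int n \<in> {-pi..pi}" using exists_int_shift_in_period by blast
  define a' where "a' = a - 2 * pi * of_int n"
  have "integral {a..a + 2 * pi} f = integral {a'..a' + 2 * pi} f"
    using shift[where s = a' and t = "a' + 2 * pi" and n = n] by (simp add: a'_def algebra_simps)
  also have "\<dots> = integral {a'..pi} f + integral {pi..a' + 2 * pi} f"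
    using n int by (intro Henstock_Kurzweil_Integration.integral_combine[symmetric]) (auto simp: a'_def)
  also have "integral {pi..a' + 2 * pi} f = integral {-pi..a'} f"
    using shift[where s = "-pi" and t = a' and n = 1] by simp
  also have "integral {a'..pi} f + integral {-pi..a'} f = integral {-pi..pi} f"
    using n int Henstock_Kurzweil_Integration.integral_combine[of "-pi" a' pi f] by (auto simp: a'_def)
  finally show ?thesis .
qed

lemma integral_periodic_2pi_reflect:
  assumes c: "continuous_on UNIV f" and p: "periodic_2pi f"
  shows "integral {-pi..pi} (\<lambda>u. f (x - u)) = integral {-pi..pi} (f :: real \<Rightarrow> real)"
proof -
  have "integral {-pi..pi} (\<lambda>u. f (x - u)) = integral {-pi..pi} (\<lambda>v. f (v + x))"
    using Henstock_Kurzweil_Integration.integral_reflect_real[where a = "-pi" and b = pi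
        and f = "\<lambda>v. f (v + x)"] by simp
  also have "\<dots> = integral {x - pi..(x - pi) + 2 * pi} f"
    using integral_shift_real_ivl[where a = "x - pi" and b = "x + pi" and c = x and f = f]
    by (simp add: algebra_simps)
  also have "\<dots> = integral {-pi..pi} f" by (rule integral_periodic_2pi_shift[OF c p])
  finally show ?thesis .
qed

section \<open>The Jackson operator\<close>

definition jackson_conv :: "nat \<Rightarrow> (real \<Rightarrow> real) \<Rightarrow> real \<Rightarrow> real" where
  "jackson_conv q f x = integral {-pi..pi} (\<lambda>u. jackson_kernel q u * f (x - u)) / (2 * pi)"

definition jackson_rem :: "nat \<Rightarrow> (real \<Rightarrow> real) \<Rightarrow> real \<Rightarrow> real" where
  "jackson_rem q f x = f x - jackson_conv q f x"

lemma continuous_on_compose_UNIV: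
  "continuous_on UNIV f \<Longrightarrow> continuous_on S g \<Longrightarrow> continuous_on S (\<lambda>x. f (g x))"
  using continuous_on_compose2[of UNIV f S g] by auto

lemma integrable_jackson_conv:
  assumes "continuous_on UNIV f"
  shows "(\<lambda>u. jackson_kernel q u * f (x - u)) integrable_on {-pi..pi}"
  by (intro integrable_continuous_real continuous_intros continuous_on_compose_UNIV[OF assms])

lemma periodic_2pi_jackson_conv: "periodic_2pi f \<Longrightarrow> periodic_2pi (jackson_conv q f)"
proof -
  assume "periodic_2pi f"
  then have "f (x + 2 * pi - u) = f (x - u)" for x u
    unfolding periodic_2pi_def by (metis add_diff_eq diff_add_eq)
  then show ?thesis unfolding periodic_2pi_def jackson_conv_def by simp
qed

lemma abs_jackson_conv_le:
  assumes q: "q \<ge> 1" and c: "continuous_on UNIV f" and B: "\<And>x. \<bar>f x\<bar> \<le> B"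
  shows "\<bar>jackson_conv q f x\<bar> \<le> B"
proof -
  have "norm (integral {-pi..pi} (\<lambda>u. jackson_kernel q u * f (x - u)))
      \<le> integral {-pi..pi} (\<lambda>u. jackson_kernel q u * B)"
    using jackson_kernel_nonneg[OF q] B
    by (intro integral_norm_bound_integral integrable_jackson_conv[OF c]
        integrable_continuous_real continuous_intros) (auto simp: abs_mult mult_left_mono)
  also have "\<dots> = 2 * pi * B" using integral_jackson_kernel[OF q] by simp
  finally show ?thesis unfolding jackson_conv_def by (simp add: field_simps)
qed

lemma abs_jackson_rem_le_integral:
  assumes q: "q \<ge> 1" and c: "continuous_on UNIV f" and \<phi>: "continuous_on {-pi..pi} \<phi>"
    and le: "\<And>u. u \<in> {-pi..pi} \<Longrightarrow> \<bar>f x - f (x - u)\<bar> \<le> \<phi> u"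
  shows "\<bar>jackson_rem q f x\<bar> \<le> integral {-pi..pi} (\<lambda>u. jackson_kernel q u * \<phi> u) / (2 * pi)"
proof -
  have i1: "(\<lambda>u. jackson_kernel q u * f x) integrable_on {-pi..pi}"
    by (intro integrable_continuous_real continuous_intros)
  have "f x = integral {-pi..pi} (\<lambda>u. jackson_kernel q u * f x) / (2 * pi)"
    using integral_jackson_kernel[OF q] by simp
  then have "jackson_rem q f x
      = integral {-pi..pi} (\<lambda>u. jackson_kernel q u * (f x - f (x - u))) / (2 * pi)"
    unfolding jackson_rem_def jackson_conv_def
    using integral_diff[OF i1 integrable_jackson_conv[OF c]]
    by (simp add: right_diff_distrib diff_divide_distrib)
  moreover have "norm (integral {-pi..pi} (\<lambda>u. jackson_kernel q u * (f x - f (x - u))))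
      \<le> integral {-pi..pi} (\<lambda>u. jackson_kernel q u * \<phi> u)"
    using jackson_kernel_nonneg[OF q] le
    by (intro integral_norm_bound_integral integrable_continuous_real continuous_intros
        continuous_on_compose_UNIV[OF c] \<phi>) (auto simp: abs_mult mult_left_mono)
  ultimately show ?thesis by (simp add: divide_right_mono)
qed

lemma abs_jackson_rem_le_lipschitz:
  assumes q: "q \<ge> 1" and d: "\<And>x. (f has_real_derivative f' x) (at x)" and B: "\<And>x. \<bar>f' x\<bar> \<le> B"
  shows "\<bar>jackson_rem q f x\<bar> \<le> B * (8192 / real q)"
proof -
  have c: "continuous_on UNIV f"
    using d by (meson DERIV_continuous continuous_at_imp_continuous_on)
  have "\<bar>f x - f (x - u)\<bar> \<le> B * \<bar>u\<bar>" for u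
    using field_differentiable_bound[of UNIV f f' B x "x - u"] d B by simp
  then have "\<bar>jackson_rem q f x\<bar> \<le> integral {-pi..pi} (\<lambda>u. jackson_kernel q u * (B * \<bar>u\<bar>)) / (2 * pi)"
    by (intro abs_jackson_rem_le_integral[OF q c] continuous_intros)
  also have "\<dots> = B * (integral {-pi..pi} (\<lambda>u. jackson_kernel q u * \<bar>u\<bar>) / (2 * pi))"
  proof -
    have "(\<lambda>u. jackson_kernel q u * (B * \<bar>u\<bar>)) = (\<lambda>u. B * (jackson_kernel q u * \<bar>u\<bar>))"
      by (auto simp: mult_ac)
    then show ?thesis by (simp only: Henstock_Kurzweil_Integration.integral_mult_right) simp
  qed
  also have "\<dots> \<le> B * (8192 / real q)"
    using integral_jackson_kernel_moment_le[OF q] B[of 0] by (intro mult_left_mono) auto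
  finally show ?thesis .
qed

text \<open>Splitting at \<open>|u| = d\<close> turns an \<open>\<alpha>\<close>-Holder modulus into a constant plus a Lipschitz one.\<close>
lemma powr_le_split:
  fixes u d a :: real
  assumes d: "0 < d" and a: "0 < a" "a \<le> 1"
  shows "\<bar>u\<bar> powr a \<le> d powr a + d powr (a - 1) * \<bar>u\<bar>"
proof (cases "\<bar>u\<bar> \<le> d")
  case True
  then have "\<bar>u\<bar> powr a \<le> d powr a" using a by (intro powr_mono2) auto
  then show ?thesis by (simp add: add_increasing2)
next
  case False
  then have "\<bar>u\<bar> powr a = \<bar>u\<bar> powr (a - 1) * \<bar>u\<bar>" using d by (simp add: powr_diff)
  also have "\<dots> \<le> d powr (a - 1) * \<bar>u\<bar>"
    using False d a by (intro mult_right_mono powr_mono2') auto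
  finally show ?thesis by (simp add: add_increasing)
qed

lemma abs_jackson_rem_le_holder:
  assumes q: "q \<ge> 1" and c: "continuous_on UNIV f" and a: "0 < a" "a \<le> 1" and C: "0 \<le> C"
    and H: "\<And>x y. \<bar>f x - f y\<bar> \<le> C * \<bar>x - y\<bar> powr a"
  shows "\<bar>jackson_rem q f x\<bar> \<le> 2 * C * (8192 / real q) powr a"
proof -
  define d where "d = 8192 / real q"
  have d: "0 < d" using q by (simp add: d_def)
  have "\<bar>f x - f (x - u)\<bar> \<le> C * d powr a + C * d powr (a - 1) * \<bar>u\<bar>" for u
    using H[of x "x - u"] mult_left_mono[OF powr_le_split[OF d a, of u] C] by (simp add: algebra_simps)
  then have "\<bar>jackson_rem q f x\<bar>
      \<le> integral {-pi..pi} (\<lambda>u. jackson_kernel q u * (C * d powr a + C * d powr (a - 1) * \<bar>u\<bar>)) / (2 * pi)"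
    by (intro abs_jackson_rem_le_integral[OF q c] continuous_intros)
  also have "\<dots> = C * d powr a * (integral {-pi..pi} (jackson_kernel q) / (2 * pi))
      + C * d powr (a - 1) * (integral {-pi..pi} (\<lambda>u. jackson_kernel q u * \<bar>u\<bar>) / (2 * pi))"
  proof -
    have e: "(\<lambda>u. jackson_kernel q u * (C * d powr a + C * d powr (a - 1) * \<bar>u\<bar>))
        = (\<lambda>u. C * d powr a * jackson_kernel q u + C * d powr (a - 1) * (jackson_kernel q u * \<bar>u\<bar>))"
      by (auto simp: algebra_simps)
    have i1: "(\<lambda>u. C * d powr a * jackson_kernel q u) integrable_on {-pi..pi}"
      and i2: "(\<lambda>u. C * d powr (a - 1) * (jackson_kernel q u * \<bar>u\<bar>)) integrable_on {-pi..pi}"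
      by (intro integrable_continuous_real continuous_intros)+
    show ?thesis unfolding e Henstock_Kurzweil_Integration.integral_add[OF i1 i2]
      by (simp only: Henstock_Kurzweil_Integration.integral_mult_right add_divide_distrib times_divide_eq_right)
  qed
  also have "\<dots> \<le> C * d powr a + C * d powr (a - 1) * d"
    using integral_jackson_kernel[OF q] integral_jackson_kernel_moment_le[OF q] C
    unfolding d_def[symmetric] by (intro add_mono mult_left_mono) auto
  also have "C * d powr (a - 1) * d = C * d powr a"
    using d by (simp add: powr_diff)
  finally show ?thesis by (simp add: d_def)
qed

lemma has_real_derivative_jackson_conv:
  assumes d: "\<And>x. (f has_real_derivative f' x) (at x)" and c': "continuous_on UNIV f'"
  shows "(jackson_conv q f has_real_derivative jackson_conv q f' x) (at x)"
proof -
  have c: "continuous_on UNIV f"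
    using d by (meson DERIV_continuous continuous_at_imp_continuous_on)
  have "((\<lambda>x. integral (cbox (-pi) pi) (\<lambda>u. jackson_kernel q u * f (x - u))) has_field_derivative
          integral (cbox (-pi) pi) (\<lambda>u. jackson_kernel q u * f' (x - u))) (at x within UNIV)"
  proof (rule leibniz_rule_field_derivative[where fx = "\<lambda>x u. jackson_kernel q u * f' (x - u)"])
    fix x u
    show "((\<lambda>x. jackson_kernel q u * f (x - u)) has_field_derivative jackson_kernel q u * f' (x - u))
        (at x within UNIV)"
      by (auto intro!: derivative_eq_intros DERIV_chain2[OF d])
  next
    have "continuous_on (UNIV \<times> cbox (- pi) pi) (\<lambda>p. jackson_kernel q (snd p) * f' (fst p - snd p))"
      by (intro continuous_intros continuous_on_compose_UNIV[OF c']
          continuous_on_compose_UNIV[OF continuous_on_jackson_kernel])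
    then show "continuous_on (UNIV \<times> cbox (- pi) pi) (\<lambda>(x, u). jackson_kernel q u * f' (x - u))"
      by (simp add: split_beta')
  qed (use integrable_jackson_conv[OF c] in auto)
  then show ?thesis unfolding jackson_conv_def[abs_def] by (auto intro: DERIV_cdivide)
qed

lemma has_real_derivative_jackson_rem:
  assumes "\<And>x. (f has_real_derivative f' x) (at x)" "continuous_on UNIV f'"
  shows "(jackson_rem q f has_real_derivative jackson_rem q f' x) (at x)"
  unfolding jackson_rem_def[abs_def] by (intro DERIV_diff assms has_real_derivative_jackson_conv)

lemma jackson_conv_swap:
  assumes q: "q \<ge> 1" and c: "continuous_on UNIV f" and p: "periodic_2pi f"
  shows "jackson_conv q f x = integral {-pi..pi} (\<lambda>t. jackson_kernel q (x - t) * f t) / (2 * pi)"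
proof -
  define \<psi> where "\<psi> t = jackson_kernel q (x - t) * f t" for t
  have "continuous_on UNIV \<psi>" unfolding \<psi>_def[abs_def]
    by (intro continuous_intros continuous_on_compose_UNIV[OF continuous_on_jackson_kernel] c)
  moreover have "periodic_2pi \<psi>"
    using p cos_poly_periodic[OF cos_poly_jackson_kernel[OF q], of "x - t - 2 * pi" for t]
    unfolding periodic_2pi_def \<psi>_def by (simp add: algebra_simps)
  ultimately have "integral {-pi..pi} (\<lambda>u. \<psi> (x - u)) = integral {-pi..pi} \<psi>"
    by (rule integral_periodic_2pi_reflect)
  then show ?thesis unfolding jackson_conv_def \<psi>_def by simp
qed

section \<open>Trigonometric polynomials and their entire extensions\<close>

definition trig_poly :: "nat \<Rightarrow> real \<Rightarrow> (real \<Rightarrow> real) \<Rightarrow> bool" where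
  "trig_poly N S f \<longleftrightarrow> (\<exists>a b.
     (\<forall>x. f x = (\<Sum>n\<le>N. a n * cos (real n * x) + b n * sin (real n * x))) \<and>
     (\<Sum>n\<le>N. \<bar>a n\<bar> + \<bar>b n\<bar>) \<le> S)"

lemma continuous_on_trig_poly: "trig_poly N S f \<Longrightarrow> continuous_on A f"
proof -
  assume "trig_poly N S f"
  then obtain a b where "f = (\<lambda>x. \<Sum>n\<le>N. a n * cos (real n * x) + b n * sin (real n * x))"
    unfolding trig_poly_def by blast
  then show ?thesis by (simp add: continuous_intros)
qed

lemma abs_integral_mult_le:
  assumes "continuous_on UNIV g" "continuous_on UNIV f" "\<And>t. \<bar>g t\<bar> \<le> 1" "\<And>t. \<bar>f t\<bar> \<le> B"
  shows "\<bar>integral {-pi..pi} (\<lambda>t. g t * f t)\<bar> \<le> 2 * pi * B"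
proof -
  have "\<bar>g t * f t\<bar> \<le> B" for t
    using mult_mono[OF assms(3) assms(4), of t t] by (simp add: abs_mult)
  then have "norm (integral {-pi..pi} (\<lambda>t. g t * f t)) \<le> integral {-pi..pi} (\<lambda>t. B)"
    by (intro integral_norm_bound_integral integrable_continuous_real
        continuous_intros continuous_on_subset[OF assms(1)] continuous_on_subset[OF assms(2)]) auto
  then show ?thesis by simp
qed

lemma integral_cos_poly_conv:
  assumes K: "\<forall>v. K v = (\<Sum>n\<le>N. k n * cos (real n * v))" and c: "continuous_on UNIV f"
  shows "integral {-pi..pi} (\<lambda>t. K (x - t) * f t)
    = (\<Sum>n\<le>N. k n * cos (real n * x) * integral {-pi..pi} (\<lambda>t. cos (real n * t) * f t)
             + k n * sin (real n * x) * integral {-pi..pi} (\<lambda>t. sin (real n * t) * f t))"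
proof -
  have ic: "(\<lambda>t. c * (cos (real n * t) * f t)) integrable_on {-pi..pi}"
    and isn: "(\<lambda>t. c * (sin (real n * t) * f t)) integrable_on {-pi..pi}" for c n
    by (auto intro!: integrable_continuous_real continuous_intros continuous_on_subset[OF c])
  have "K (x - t) * f t = (\<Sum>n\<le>N. k n * cos (real n * x) * (cos (real n * t) * f t)
      + k n * sin (real n * x) * (sin (real n * t) * f t))" for t
    using K by (simp add: sum_distrib_left sum_distrib_right right_diff_distrib cos_diff algebra_simps)
  then have "integral {-pi..pi} (\<lambda>t. K (x - t) * f t) = (\<Sum>n\<le>N. integral {-pi..pi}
      (\<lambda>t. k n * cos (real n * x) * (cos (real n * t) * f t) + k n * sin (real n * x) * (sin (real n * t) * f t)))"
    using ic isn by (simp add: integral_sum integrable_add)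
  also have "\<dots> = (\<Sum>n\<le>N. k n * cos (real n * x) * integral {-pi..pi} (\<lambda>t. cos (real n * t) * f t)
             + k n * sin (real n * x) * integral {-pi..pi} (\<lambda>t. sin (real n * t) * f t))"
    using ic isn by (simp add: integral_add)
  finally show ?thesis .
qed

lemma trig_poly_cos_poly_conv:
  assumes K: "cos_poly N S K" and c: "continuous_on UNIV f" and B: "\<And>x. \<bar>f x\<bar> \<le> B"
  shows "trig_poly N (2 * S * B) (\<lambda>x. integral {-pi..pi} (\<lambda>t. K (x - t) * f t) / (2 * pi))"
proof -
  obtain k where k: "\<forall>v. K v = (\<Sum>n\<le>N. k n * cos (real n * v))" "(\<Sum>n\<le>N. \<bar>k n\<bar>) \<le> S"
    using K unfolding cos_poly_def by blast
  define A where "A n = integral {-pi..pi} (\<lambda>t. cos (real n * t) * f t)" for n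
  define Bs where "Bs n = integral {-pi..pi} (\<lambda>t. sin (real n * t) * f t)" for n
  have "integral {-pi..pi} (\<lambda>t. K (x - t) * f t) / (2 * pi)
      = (\<Sum>n\<le>N. k n * A n / (2 * pi) * cos (real n * x) + k n * Bs n / (2 * pi) * sin (real n * x))" for x
    unfolding integral_cos_poly_conv[OF k(1) c] A_def Bs_def sum_divide_distrib
    by (intro sum.cong refl) (simp add: field_simps)
  moreover have "(\<Sum>n\<le>N. \<bar>k n * A n / (2 * pi)\<bar> + \<bar>k n * Bs n / (2 * pi)\<bar>) \<le> 2 * S * B"
  proof -
    have "\<bar>A n\<bar> \<le> 2 * pi * B" "\<bar>Bs n\<bar> \<le> 2 * pi * B" for n
      unfolding A_def Bs_def using B by (intro abs_integral_mult_le continuous_intros c; simp)+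
    then have "\<bar>k n\<bar> * (\<bar>A n\<bar> / (2 * pi)) \<le> \<bar>k n\<bar> * B" "\<bar>k n\<bar> * (\<bar>Bs n\<bar> / (2 * pi)) \<le> \<bar>k n\<bar> * B" for n
      by (intro mult_left_mono; simp add: pos_divide_le_eq mult.commute)+
    then have "\<bar>k n * A n / (2 * pi)\<bar> \<le> \<bar>k n\<bar> * B" "\<bar>k n * Bs n / (2 * pi)\<bar> \<le> \<bar>k n\<bar> * B" for n
      by (simp_all add: abs_mult)
    then have "(\<Sum>n\<le>N. \<bar>k n * A n / (2 * pi)\<bar> + \<bar>k n * Bs n / (2 * pi)\<bar>)
        \<le> (\<Sum>n\<le>N. \<bar>k n\<bar>) * B + (\<Sum>n\<le>N. \<bar>k n\<bar>) * B"
      unfolding sum_distrib_right sum.distrib[symmetric] by (intro sum_mono add_mono)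
    also have "\<dots> \<le> S * B + S * B" using k(2) B[of 0] by (intro add_mono mult_right_mono) auto
    finally show ?thesis by (simp add: mult.commute mult.left_commute)
  qed
  ultimately show ?thesis unfolding trig_poly_def
    by (intro exI[of _ "\<lambda>n. k n * A n / (2 * pi)"] exI[of _ "\<lambda>n. k n * Bs n / (2 * pi)"]) auto
qed

lemma trig_poly_jackson_conv:
  assumes q: "q \<ge> 1" and c: "continuous_on UNIV f" and p: "periodic_2pi f" and B: "\<And>x. \<bar>f x\<bar> \<le> B"
  shows "trig_poly (2 * q) (32 * pi * real q * B) (jackson_conv q f)"
  using trig_poly_cos_poly_conv[OF cos_poly_jackson_kernel[OF q] c B]
  by (simp add: jackson_conv_swap[OF q c p, abs_def] mult_ac)

definition entire_strip_bound :: "real \<Rightarrow> real \<Rightarrow> (real \<Rightarrow> real) \<Rightarrow> bool" where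
  "entire_strip_bound h M g \<longleftrightarrow> (\<exists>G. G holomorphic_on UNIV \<and>
     (\<forall>x. G (complex_of_real x) = complex_of_real (g x)) \<and> (\<forall>z. \<bar>Im z\<bar> \<le> h \<longrightarrow> norm (G z) \<le> M))"

lemma entire_strip_bound_mono: "entire_strip_bound h M g \<Longrightarrow> M \<le> M' \<Longrightarrow> entire_strip_bound h M' g"
  unfolding entire_strip_bound_def by (meson order_trans)

lemma entire_strip_bound_add:
  assumes "entire_strip_bound h M1 f" "entire_strip_bound h M2 g"
  shows "entire_strip_bound h (M1 + M2) (\<lambda>x. f x + g x)"
proof -
  obtain F G where F: "F holomorphic_on UNIV" "\<forall>x. F (complex_of_real x) = complex_of_real (f x)"
      "\<forall>z. \<bar>Im z\<bar> \<le> h \<longrightarrow> norm (F z) \<le> M1"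
    and G: "G holomorphic_on UNIV" "\<forall>x. G (complex_of_real x) = complex_of_real (g x)"
      "\<forall>z. \<bar>Im z\<bar> \<le> h \<longrightarrow> norm (G z) \<le> M2"
    using assms unfolding entire_strip_bound_def by blast
  have "norm (F z + G z) \<le> M1 + M2" if "\<bar>Im z\<bar> \<le> h" for z
    using F(3) G(3) that by (meson add_mono norm_triangle_ineq order_trans)
  then show ?thesis unfolding entire_strip_bound_def
    using F G by (intro exI[of _ "\<lambda>z. F z + G z"]) (auto intro: holomorphic_intros)
qed

lemma norm_exp_i_times_le: "norm (exp (\<i> * w)) \<le> exp \<bar>Im w\<bar>" "norm (exp (- (\<i> * w))) \<le> exp \<bar>Im w\<bar>"
  by (simp_all add: norm_exp_eq_Re)

lemma norm_cos_le_exp_abs_Im: "norm (cos (w::complex)) \<le> exp \<bar>Im w\<bar>"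
proof -
  have "norm (cos w) = norm (exp (\<i> * w) + exp (- (\<i> * w))) / 2" by (simp add: cos_exp_eq norm_divide)
  also have "\<dots> \<le> (norm (exp (\<i> * w)) + norm (exp (- (\<i> * w)))) / 2"
    by (intro divide_right_mono norm_triangle_ineq) auto
  also have "\<dots> \<le> (exp \<bar>Im w\<bar> + exp \<bar>Im w\<bar>) / 2"
    using norm_exp_i_times_le[of w] by (intro divide_right_mono add_mono) auto
  finally show ?thesis by simp
qed

lemma norm_sin_le_exp_abs_Im: "norm (sin (w::complex)) \<le> exp \<bar>Im w\<bar>"
proof -
  have "norm (sin w) = norm (exp (\<i> * w) - exp (- (\<i> * w))) / 2" by (simp add: sin_exp_eq norm_divide norm_mult)
  also have "\<dots> \<le> (norm (exp (\<i> * w)) + norm (exp (- (\<i> * w)))) / 2"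
    by (intro divide_right_mono norm_triangle_ineq4) auto
  also have "\<dots> \<le> (exp \<bar>Im w\<bar> + exp \<bar>Im w\<bar>) / 2"
    using norm_exp_i_times_le[of w] by (intro divide_right_mono add_mono) auto
  finally show ?thesis by simp
qed

lemma entire_strip_bound_trig_poly:
  assumes h: "0 \<le> h" and g: "trig_poly N S g"
  shows "entire_strip_bound h (S * exp (real N * h)) g"
proof -
  obtain a b where g_eq: "\<forall>x. g x = (\<Sum>n\<le>N. a n * cos (real n * x) + b n * sin (real n * x))"
    and S: "(\<Sum>n\<le>N. \<bar>a n\<bar> + \<bar>b n\<bar>) \<le> S"
    using g unfolding trig_poly_def by blast
  define G where "G z = (\<Sum>n\<le>N. complex_of_real (a n) * cos (of_nat n * z)
      + complex_of_real (b n) * sin (of_nat n * z))" for z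
  have "G (complex_of_real x) = complex_of_real (g x)" for x
  proof -
    have "complex_of_real (real n * x) = of_nat n * complex_of_real x" for n by simp
    then show ?thesis unfolding G_def g_eq[rule_format]
      by (simp add: cos_of_real[symmetric] sin_of_real[symmetric] del: cos_of_real sin_of_real)
  qed
  moreover have "norm (G z) \<le> S * exp (real N * h)" if z: "\<bar>Im z\<bar> \<le> h" for z
  proof -
    have E: "exp \<bar>Im (of_nat n * z)\<bar> \<le> exp (real N * h)" if "n \<le> N" for n
      using that z h by (simp add: abs_mult mult_mono)
    have "norm (G z) \<le> (\<Sum>n\<le>N. \<bar>a n\<bar> * norm (cos (of_nat n * z)) + \<bar>b n\<bar> * norm (sin (of_nat n * z)))"
      unfolding G_def by (rule order_trans[OF norm_sum sum_mono])
        (auto intro: order_trans[OF norm_triangle_ineq] simp: norm_mult)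
    also have "\<dots> \<le> (\<Sum>n\<le>N. (\<bar>a n\<bar> + \<bar>b n\<bar>) * exp (real N * h))"
      using order_trans[OF norm_cos_le_exp_abs_Im E] order_trans[OF norm_sin_le_exp_abs_Im E]
      by (intro sum_mono) (simp add: distrib_right add_mono mult_left_mono)
    also have "\<dots> \<le> S * exp (real N * h)"
      using S by (simp flip: sum_distrib_right)
    finally show ?thesis .
  qed
  moreover have "G holomorphic_on UNIV" unfolding G_def by (intro holomorphic_intros)
  ultimately show ?thesis unfolding entire_strip_bound_def by blast
qed

section \<open>Iterating the residual\<close>

lemma cont_periodic_2pi_jackson_rem:
  assumes q: "q \<ge> 1" and g: "cont_periodic_2pi g"
  shows "cont_periodic_2pi (jackson_rem q g)"
proof -
  have c: "continuous_on UNIV g" and p: "periodic_2pi g" using g by (auto simp: cont_periodic_2pi_def)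
  obtain B where "\<And>x. \<bar>g x\<bar> \<le> B" using bounded_periodic_2pi[OF c p] by blast
  then have "continuous_on UNIV (jackson_conv q g)"
    by (rule continuous_on_trig_poly[OF trig_poly_jackson_conv[OF q c p]])
  moreover have "periodic_2pi (jackson_conv q g)" by (rule periodic_2pi_jackson_conv[OF p])
  ultimately show ?thesis
    using c p unfolding cont_periodic_2pi_def periodic_2pi_def jackson_rem_def[abs_def]
    by (auto intro: continuous_intros)
qed

lemma cont_periodic_2pi_jackson_rem_funpow:
  "q \<ge> 1 \<Longrightarrow> cont_periodic_2pi g \<Longrightarrow> cont_periodic_2pi ((jackson_rem q ^^ j) g)"
  by (induction j) (auto intro: cont_periodic_2pi_jackson_rem)

lemma abs_jackson_rem_funpow_le:
  assumes q: "q \<ge> 1" and g: "cont_periodic_2pi g" and B: "\<And>x. \<bar>g x\<bar> \<le> B"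
  shows "\<bar>(jackson_rem q ^^ j) g x\<bar> \<le> 2 ^ j * B"
proof (induction j arbitrary: x)
  case (Suc j)
  define G where "G = (jackson_rem q ^^ j) g"
  have "continuous_on UNIV G"
    using cont_periodic_2pi_jackson_rem_funpow[OF q g] by (simp add: G_def cont_periodic_2pi_def)
  then have "\<bar>jackson_conv q G x\<bar> \<le> 2 ^ j * B"
    by (rule abs_jackson_conv_le[OF q _ Suc.IH[folded G_def]])
  moreover have "(jackson_rem q ^^ Suc j) g = jackson_rem q G" by (simp add: G_def)
  ultimately show ?case
    using Suc.IH[of x, folded G_def] unfolding jackson_rem_def by simp
qed (simp add: B)

lemma has_real_derivative_jackson_rem_funpow:
  assumes q: "q \<ge> 1" and g': "cont_periodic_2pi g'" and d: "\<And>x. (g has_real_derivative g' x) (at x)"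
  shows "((jackson_rem q ^^ j) g has_real_derivative (jackson_rem q ^^ j) g' x) (at x)"
proof (induction j arbitrary: x)
  case (Suc j)
  have "continuous_on UNIV ((jackson_rem q ^^ j) g')"
    using cont_periodic_2pi_jackson_rem_funpow[OF q g'] by (simp add: cont_periodic_2pi_def)
  then show ?case using has_real_derivative_jackson_rem[OF Suc.IH] by simp
qed (simp add: d)

text \<open>\<open>F - R\<^sup>j F = T F + T (R F) + \<dots> + T (R\<^sup>j\<^sup>-\<^sup>1 F)\<close>, a sum of \<open>j\<close> trigonometric polynomials of degree \<open>2 q\<close>.\<close>
lemma entire_strip_bound_sub_jackson_rem_funpow:
  assumes q: "q \<ge> 1" and F: "cont_periodic_2pi F" and S: "\<And>x. \<bar>F x\<bar> \<le> S" and h: "0 \<le> h"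
  shows "entire_strip_bound h (32 * pi * real q * S * 2 ^ j * exp (real (2 * q) * h))
           (\<lambda>x. F x - (jackson_rem q ^^ j) F x)"
proof (induction j)
  case 0
  have "entire_strip_bound h 0 (\<lambda>x. F x - (jackson_rem q ^^ 0) F x)"
    unfolding entire_strip_bound_def by (intro exI[of _ "\<lambda>z. 0"]) auto
  then show ?case by (rule entire_strip_bound_mono) (use S[of 0] in simp)
next
  case (Suc j)
  define E where "E = exp (real (2 * q) * h)"
  define G where "G = (jackson_rem q ^^ j) F"
  have "cont_periodic_2pi G" unfolding G_def by (rule cont_periodic_2pi_jackson_rem_funpow[OF q F])
  then have "trig_poly (2 * q) (32 * pi * real q * (2 ^ j * S)) (jackson_conv q G)"
    unfolding cont_periodic_2pi_def G_def
    by (intro trig_poly_jackson_conv[OF q] abs_jackson_rem_funpow_le[OF q F S]) auto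
  from entire_strip_bound_add[OF Suc.IH[folded G_def] entire_strip_bound_trig_poly[OF h this]]
  have "entire_strip_bound h (32 * pi * real q * S * 2 ^ j * E + 32 * pi * real q * (2 ^ j * S) * E)
      (\<lambda>x. F x - G x + jackson_conv q G x)"
    by (simp add: E_def)
  moreover have "(jackson_rem q ^^ Suc j) F = jackson_rem q G" by (simp add: G_def)
  ultimately show ?case unfolding jackson_rem_def by (simp add: E_def algebra_simps)
qed

text \<open>\<open>R\<close> commutes with differentiation, so \<open>R\<^sup>k\<^sup>+\<^sup>1 f\<^sub>0\<close> has derivative \<open>R\<^sup>k\<^sup>+\<^sup>1 f\<^sub>1\<close> and one more
  application of \<open>R\<close> only costs the Lipschitz factor \<open>8192 / q\<close>.\<close>
lemma abs_jackson_rem_funpow_le_holder: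
  fixes fs :: "nat \<Rightarrow> real \<Rightarrow> real"
  assumes q: "q \<ge> 1" and g: "\<And>i. i \<le> k \<Longrightarrow> cont_periodic_2pi (fs i)"
    and d: "\<And>i x. i < k \<Longrightarrow> (fs i has_real_derivative fs (Suc i) x) (at x)"
    and a: "0 < a" "a \<le> 1" and C: "0 \<le> C"
    and H: "\<And>x y. \<bar>fs k x - fs k y\<bar> \<le> C * \<bar>x - y\<bar> powr a"
  shows "\<bar>(jackson_rem q ^^ Suc k) (fs 0) x\<bar> \<le> (8192 / real q) ^ k * (2 * C * (8192 / real q) powr a)"
  using g d H
proof (induction k arbitrary: fs x)
  case 0
  then have "continuous_on UNIV (fs 0)" by (simp add: cont_periodic_2pi_def)
  then show ?case using abs_jackson_rem_le_holder[OF q _ a C] 0 by simp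
next
  case (Suc k)
  have bound: "\<bar>(jackson_rem q ^^ Suc k) (fs 1) y\<bar> \<le> (8192 / real q) ^ k * (2 * C * (8192 / real q) powr a)" for y
    using Suc.IH[of "\<lambda>i. fs (Suc i)"] Suc.prems by simp
  have "((jackson_rem q ^^ Suc k) (fs 0) has_real_derivative (jackson_rem q ^^ Suc k) (fs 1) y) (at y)" for y
    using Suc.prems by (intro has_real_derivative_jackson_rem_funpow[OF q]) auto
  from abs_jackson_rem_le_lipschitz[OF q this bound]
  show ?case by (simp add: mult_ac)
qed

section \<open>Approachability\<close>

lemma norm_le_Sup_strip:
  assumes G: "is_strip_continuation h g G" and z: "z \<in> strip h"
  shows "norm (G z) \<le> Sup ((\<lambda>z. norm (G z)) ` strip h)"
proof (rule cSup_upper)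
  show "norm (G z) \<in> (\<lambda>z. norm (G z)) ` strip h" using z by blast
  obtain B where "\<forall>y\<in>G ` strip h. norm y \<le> B"
    using G by (auto simp: is_strip_continuation_def bounded_iff)
  then show "bdd_above ((\<lambda>z. norm (G z)) ` strip h)" by (auto intro!: bdd_aboveI[of _ B])
qed

lemma abs_le_A_norm:
  assumes "in_A h g" "0 \<le> h"
  shows "\<bar>g x\<bar> \<le> A_norm h g"
  unfolding A_norm_def
proof (rule cInf_greatest)
  show "{Sup ((\<lambda>z. norm (G z)) ` strip h) |G. is_strip_continuation h g G} \<noteq> {}"
    using assms(1) by (auto simp: in_A_def)
  fix m assume "m \<in> {Sup ((\<lambda>z. norm (G z)) ` strip h) |G. is_strip_continuation h g G}"
  then obtain G where G: "is_strip_continuation h g G" and m: "m = Sup ((\<lambda>z. norm (G z)) ` strip h)"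
    by blast
  have "norm (G (complex_of_real x)) \<le> m"
    unfolding m using assms(2) by (intro norm_le_Sup_strip[OF G]) (simp add: strip_def)
  then show "\<bar>g x\<bar> \<le> m" using G by (simp add: is_strip_continuation_def)
qed

lemma A_norm_nonneg: "in_A h g \<Longrightarrow> 0 \<le> h \<Longrightarrow> 0 \<le> A_norm h g"
  using abs_le_A_norm abs_ge_zero order_trans by blast

lemma is_strip_continuation_entire:
  assumes "entire_strip_bound h M g"
  shows "\<exists>G. is_strip_continuation h g G \<and> (\<forall>z\<in>strip h. norm (G z) \<le> M)"
proof -
  obtain G where G: "G holomorphic_on UNIV" "\<forall>x. G (complex_of_real x) = complex_of_real (g x)"
      "\<forall>z. \<bar>Im z\<bar> \<le> h \<longrightarrow> norm (G z) \<le> M"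
    using assms unfolding entire_strip_bound_def by blast
  have "G analytic_on strip h"
    using G(1) analytic_on_open analytic_on_subset by blast
  moreover have bd: "\<forall>z\<in>strip h. norm (G z) \<le> M" using G(3) by (simp add: strip_def)
  then have "bounded (G ` strip h)" by (auto simp: bounded_iff)
  ultimately show ?thesis using G(2) bd by (auto simp: is_strip_continuation_def)
qed

lemma A_norm_le:
  assumes g: "entire_strip_bound h M g" and h: "0 \<le> h"
  shows "A_norm h g \<le> M"
proof -
  let ?N = "\<lambda>G. Sup ((\<lambda>z. norm (G z)) ` strip h)"
  obtain G where G: "is_strip_continuation h g G" and bd: "\<forall>z\<in>strip h. norm (G z) \<le> M"
    using is_strip_continuation_entire[OF g] by blast
  have 0: "0 \<in> strip h" using h by (simp add: strip_def)
  have "A_norm h g \<le> ?N G"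
    unfolding A_norm_def
  proof (rule cInf_lower)
    show "?N G \<in> {?N G |G. is_strip_continuation h g G}" using G by blast
    show "bdd_below {?N G |G. is_strip_continuation h g G}"
      using norm_le_Sup_strip[OF _ 0] by (auto intro!: bdd_belowI[of _ 0] intro: order_trans[OF norm_ge_zero])
  qed
  also have "\<dots> \<le> M" using bd 0 by (intro cSup_least) auto
  finally show ?thesis .
qed

lemma approachability_le:
  assumes "0 \<le> h" "periodic_2pi Fs" "entire_strip_bound h M Fs" "\<forall>x. \<bar>F x - Fs x\<bar> \<le> \<epsilon>"
  shows "approachability h \<epsilon> F \<le> M"
proof -
  have "in_A h Fs" using assms(2) is_strip_continuation_entire[OF assms(3)] by (auto simp: in_A_def)
  then have "approachability h \<epsilon> F \<le> A_norm h Fs"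
    unfolding approachability_def using assms(1,4) abs_le_A_norm
    by (intro cInf_lower) (auto intro!: bdd_belowI[of _ 0] A_norm_nonneg)
  also have "\<dots> \<le> M" by (rule A_norm_le[OF assms(3,1)])
  finally show ?thesis .
qed

lemma approachability_ge:
  assumes "0 \<le> h" "in_A h Fs" "\<forall>x. \<bar>F x - Fs x\<bar> \<le> \<epsilon>"
  shows "\<bar>F x0\<bar> - \<epsilon> \<le> approachability h \<epsilon> F"
  unfolding approachability_def
proof (rule cInf_greatest)
  show "{A_norm h Fs |Fs. in_A h Fs \<and> (\<forall>x. \<bar>F x - Fs x\<bar> \<le> \<epsilon>)} \<noteq> {}" using assms(2,3) by blast
  fix m assume "m \<in> {A_norm h Fs |Fs. in_A h Fs \<and> (\<forall>x. \<bar>F x - Fs x\<bar> \<le> \<epsilon>)}"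
  then obtain G where G: "in_A h G" "\<forall>x. \<bar>F x - G x\<bar> \<le> \<epsilon>" "m = A_norm h G" by blast
  have "\<bar>F x0\<bar> \<le> \<bar>F x0 - G x0\<bar> + \<bar>G x0\<bar>" using abs_triangle_ineq[of "F x0 - G x0" "G x0"] by simp
  then show "\<bar>F x0\<bar> - \<epsilon> \<le> m" using G(2)[rule_format, of x0] G(3) abs_le_A_norm[OF G(1) assms(1), of x0] by linarith
qed

lemma exists_jackson_approximant:
  fixes fs :: "nat \<Rightarrow> real \<Rightarrow> real"
  assumes h: "0 \<le> h" and q: "q \<ge> 1" and g: "\<And>i. i \<le> k \<Longrightarrow> cont_periodic_2pi (fs i)"
    and d: "\<And>i x. i < k \<Longrightarrow> (fs i has_real_derivative fs (Suc i) x) (at x)"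
    and a: "0 < a" "a \<le> 1" and C: "0 \<le> C"
    and H: "\<And>x y. \<bar>fs k x - fs k y\<bar> \<le> C * \<bar>x - y\<bar> powr a"
    and S: "\<And>x. \<bar>fs 0 x\<bar> \<le> S"
  shows "\<exists>Fs. periodic_2pi Fs \<and>
           entire_strip_bound h (32 * pi * real q * S * 2 ^ Suc k * exp (real (2 * q) * h)) Fs \<and>
           (\<forall>x. \<bar>fs 0 x - Fs x\<bar> \<le> (8192 / real q) ^ k * (2 * C * (8192 / real q) powr a))"
proof (intro exI conjI)
  let ?Fs = "\<lambda>x. fs 0 x - (jackson_rem q ^^ Suc k) (fs 0) x"
  have "cont_periodic_2pi (fs 0)" "cont_periodic_2pi ((jackson_rem q ^^ Suc k) (fs 0))"
    using g[of 0] cont_periodic_2pi_jackson_rem_funpow[OF q g[of 0], of "Suc k"] by auto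
  then show "periodic_2pi ?Fs" by (auto simp: cont_periodic_2pi_def periodic_2pi_def)
  show "entire_strip_bound h (32 * pi * real q * S * 2 ^ Suc k * exp (real (2 * q) * h)) ?Fs"
    using g by (intro entire_strip_bound_sub_jackson_rem_funpow[OF q _ S h]) auto
  show "\<forall>x. \<bar>fs 0 x - ?Fs x\<bar> \<le> (8192 / real q) ^ k * (2 * C * (8192 / real q) powr a)"
    using abs_jackson_rem_funpow_le_holder[OF q g d a C H] by simp
qed

lemma ln_2_ge_half: "1 / 2 \<le> ln (2 :: real)"
  using ln_le_minus_one[of "1 / 2"] by (simp add: ln_div)

lemma log_jackson_bound_le:
  fixes K h q X :: real
  assumes K: "0 < K" and h: "0 < h" and X: "0 < X" and q: "1 \<le> q" "q \<le> 8192 * X + 1"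
    and big: "ln (K * (8192 * X + 1)) + 2 * h \<le> h * X"
  shows "log 2 (K * q * exp (2 * q * h)) \<le> 32770 * h * X"
proof -
  have "ln (K * q * exp (2 * q * h)) = ln (K * q) + 2 * q * h"
    using K q by (simp add: ln_mult)
  also have "\<dots> \<le> ln (K * (8192 * X + 1)) + 2 * (8192 * X + 1) * h"
    using K q h by (intro add_mono mult_right_mono) auto
  also have "\<dots> \<le> 16385 * h * X" using big by (simp add: algebra_simps)
  finally have "ln (K * q * exp (2 * q * h)) / ln 2 \<le> 16385 * h * X / ln 2"
    by (simp add: divide_right_mono)
  also have "\<dots> \<le> 16385 * h * X / (1 / 2)"
    using ln_2_ge_half h X by (intro divide_left_mono) auto
  finally show ?thesis by (simp add: log_def)
qed

lemma jackson_error_le: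
  assumes \<alpha>: "0 < \<alpha>" and c: "0 < c" and \<epsilon>: "0 < \<epsilon>"
    and X: "X = (12 * c / \<epsilon>) powr (1 / (real k + \<alpha>))" and q: "8192 * X \<le> real q"
  shows "(8192 / real q) ^ k * (2 * c * (8192 / real q) powr \<alpha>) \<le> \<epsilon>"
proof -
  define s where "s = real k + \<alpha>"
  define \<delta> where "\<delta> = 8192 / real q"
  have s: "0 < s" using \<alpha> by (simp add: s_def)
  have X0: "0 < X" using c \<epsilon> by (simp add: X)
  have Xs: "X powr s = 12 * c / \<epsilon>" using s c \<epsilon> by (simp add: X s_def powr_powr)
  have \<delta>: "0 < \<delta>" "\<delta> \<le> 1 / X"
    using q X0 by (auto simp: \<delta>_def field_simps)
  have "\<delta> ^ k * (2 * c * \<delta> powr \<alpha>) = 2 * c * \<delta> powr s"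
    using \<delta> by (simp add: s_def powr_add powr_realpow)
  also have "\<dots> \<le> 2 * c * (1 / X) powr s"
    using \<delta> s c by (intro mult_left_mono powr_mono2) auto
  also have "\<dots> \<le> \<epsilon>"
    using X0 Xs c \<epsilon> by (simp add: powr_divide field_simps)
  finally show ?thesis by (simp add: \<delta>_def)
qed

lemma log_approachability_le:
  fixes fs :: "nat \<Rightarrow> real \<Rightarrow> real"
  assumes h: "0 < h" and g: "\<And>i. i \<le> k \<Longrightarrow> cont_periodic_2pi (fs i)"
    and d: "\<And>i x. i < k \<Longrightarrow> (fs i has_real_derivative fs (Suc i) x) (at x)"
    and \<alpha>: "0 < \<alpha>" "\<alpha> \<le> 1" and c: "0 < c"
    and H: "\<And>x y. \<bar>fs k x - fs k y\<bar> \<le> c * \<bar>x - y\<bar> powr \<alpha>"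
    and S: "\<And>x. \<bar>fs 0 x\<bar> \<le> S"
    and \<epsilon>: "0 < \<epsilon>" "\<epsilon> < \<bar>fs 0 z\<bar>"
    and X: "X = (12 * c / \<epsilon>) powr (1 / (real k + \<alpha>))"
    and big: "ln (32 * pi * S * 2 ^ Suc k * (8192 * X + 1)) + 2 * h \<le> h * X"
  shows "log 2 (approachability h \<epsilon> (fs 0)) \<le> 32770 * h * X"
proof -
  have X0: "0 < X" using c \<epsilon> by (simp add: X)
  define q where "q = nat \<lceil>8192 * X\<rceil>"
  have q: "8192 * X \<le> real q" "real q \<le> 8192 * X + 1"
    using X0 by (simp_all add: q_def of_nat_nat ceiling_correct)
  then have q1: "q \<ge> 1" using X0 by linarith
  define M where "M = 32 * pi * real q * S * 2 ^ Suc k * exp (real (2 * q) * h)"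
  obtain Fs where Fs: "periodic_2pi Fs" "entire_strip_bound h M Fs"
      "\<forall>x. \<bar>fs 0 x - Fs x\<bar> \<le> (8192 / real q) ^ k * (2 * c * (8192 / real q) powr \<alpha>)"
    using exists_jackson_approximant[OF less_imp_le[OF h] q1 g d \<alpha> less_imp_le[OF c] H S]
    unfolding M_def by blast
  then have close: "\<forall>x. \<bar>fs 0 x - Fs x\<bar> \<le> \<epsilon>"
    using jackson_error_le[OF \<alpha>(1) c \<epsilon>(1) X q(1)] by (meson order_trans)
  have "in_A h Fs" using Fs(1) is_strip_continuation_entire[OF Fs(2)] by (auto simp: in_A_def)
  from approachability_ge[OF less_imp_le[OF h] this close, of z]
  have "0 < approachability h \<epsilon> (fs 0)" using \<epsilon> by linarith
  moreover have "approachability h \<epsilon> (fs 0) \<le> M"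
    using approachability_le[OF _ Fs(1,2) close] h by simp
  ultimately have "log 2 (approachability h \<epsilon> (fs 0)) \<le> log 2 M" by simp
  also have "M = 32 * pi * S * 2 ^ Suc k * real q * exp (2 * real q * h)"
    by (simp add: M_def mult_ac)
  also have "log 2 \<dots> \<le> 32770 * h * X"
    using S[of z] \<epsilon> q q1 X0 h big by (intro log_jackson_bound_le) auto
  finally show ?thesis .
qed

lemma periodic_2pi_deriv: "periodic_2pi f \<Longrightarrow> periodic_2pi (deriv f)"
proof -
  assume p: "periodic_2pi f"
  have fe: "(\<lambda>t. f (t + 2 * pi)) = f" using p unfolding periodic_2pi_def by auto
  have "deriv f (x + 2 * pi) = deriv f x" for x
  proof -
    have "(\<lambda>D. (f has_field_derivative D) (at (x + 2 * pi))) = (\<lambda>D. (f has_field_derivative D) (at x))"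
      using DERIV_shift[of f _ x "2 * pi"] fe by auto
    then show ?thesis unfolding deriv_def by simp
  qed
  then show ?thesis unfolding periodic_2pi_def by blast
qed

lemma continuous_on_holder:
  assumes a: "0 < a" and H: "\<And>x y. \<bar>f x - f y\<bar> \<le> C * \<bar>x - y\<bar> powr a"
  shows "continuous_on UNIV (f :: real \<Rightarrow> real)"
proof -
  have "isCont f x" for x
  proof -
    have t: "((\<lambda>y. \<bar>y - x\<bar> powr a) \<longlongrightarrow> 0) (at x)"
      by (rule tendsto_zero_powrI) (auto intro!: tendsto_eq_intros a)
    have "((\<lambda>y. f y - f x) \<longlongrightarrow> 0) (at x)"
    proof (rule Lim_null_comparison)
      show "\<forall>\<^sub>F y in at x. norm (f y - f x) \<le> C * \<bar>y - x\<bar> powr a" using H by auto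
      show "((\<lambda>y. C * \<bar>y - x\<bar> powr a) \<longlongrightarrow> 0) (at x)" using tendsto_mult_right_zero[OF t] by simp
    qed
    then show ?thesis by (simp add: isCont_def LIM_zero_cancel)
  qed
  then show ?thesis by (simp add: continuous_at_imp_continuous_on)
qed

lemma deriv_funpow_chain:
  fixes F :: "real \<Rightarrow> real"
  assumes per: "periodic_2pi F" and dif: "\<forall>j<k. \<forall>x. (deriv ^^ j) F differentiable (at x)"
    and \<alpha>: "0 < \<alpha>" and H: "\<forall>x y. \<bar>(deriv ^^ k) F x - (deriv ^^ k) F y\<bar> \<le> c * \<bar>x - y\<bar> powr \<alpha>"
  shows "\<And>i. i \<le> k \<Longrightarrow> cont_periodic_2pi ((deriv ^^ i) F)"
    and "\<And>i x. i < k \<Longrightarrow> ((deriv ^^ i) F has_real_derivative (deriv ^^ Suc i) F x) (at x)"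
proof -
  show d: "((deriv ^^ i) F has_real_derivative (deriv ^^ Suc i) F x) (at x)" if "i < k" for i x
    using dif that by (simp add: DERIV_deriv_iff_real_differentiable)
  have "periodic_2pi ((deriv ^^ i) F)" for i
    by (induction i) (auto simp: per periodic_2pi_deriv)
  moreover have "continuous_on UNIV ((deriv ^^ i) F)" if "i \<le> k" for i
  proof (cases "i = k")
    case True
    then show ?thesis using continuous_on_holder[OF \<alpha>] H by blast
  next
    case False
    then have "isCont ((deriv ^^ i) F) x" for x using d[of i x] that by (intro DERIV_isCont) auto
    then show ?thesis by (simp add: continuous_at_imp_continuous_on)
  qed
  ultimately show "cont_periodic_2pi ((deriv ^^ i) F)" if "i \<le> k" for i
    using that by (simp add: cont_periodic_2pi_def)
qed

theorem lemma3:
  shows "\<exists>C::real. \<forall>(h::real) (k::nat) (\<alpha>::real) (c::real) (F::real \<Rightarrow> real).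
     h > 0 \<and> 0 < \<alpha> \<and> \<alpha> \<le> 1 \<and> c > 0 \<and> F \<noteq> (\<lambda>_. 0) \<and> periodic_2pi F \<and>
     (\<forall>j<k. \<forall>x. (deriv ^^ j) F differentiable (at x)) \<and>
     (\<forall>x y. \<bar>(deriv ^^ k) F x - (deriv ^^ k) F y\<bar> \<le> c * \<bar>x - y\<bar> powr \<alpha>)
     \<longrightarrow> (\<forall>\<^sub>F \<epsilon> in at_right 0.
            log 2 (approachability h \<epsilon> F) \<le> C * h * (12 * c / \<epsilon>) powr (1 / (real k + \<alpha>)))"
proof (intro exI[of _ 32770] allI impI, elim conjE)
  fix h \<alpha> c :: real and k :: nat and F :: "real \<Rightarrow> real"
  assume h: "h > 0" and \<alpha>: "0 < \<alpha>" "\<alpha> \<le> 1" and c: "c > 0" and F0: "F \<noteq> (\<lambda>_. 0)"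
    and per: "periodic_2pi F" and dif: "\<forall>j<k. \<forall>x. (deriv ^^ j) F differentiable (at x)"
    and H: "\<forall>x y. \<bar>(deriv ^^ k) F x - (deriv ^^ k) F y\<bar> \<le> c * \<bar>x - y\<bar> powr \<alpha>"
  note chain = deriv_funpow_chain[OF per dif \<alpha>(1) H]
  obtain x0 where x0: "F x0 \<noteq> 0" using F0 by auto
  obtain S where S: "\<And>x. \<bar>F x\<bar> \<le> S"
    using bounded_periodic_2pi[OF _ per] chain(1)[of 0] by (auto simp: cont_periodic_2pi_def)
  have "0 < \<bar>F x0\<bar>" using x0 by simp
  then have S0: "0 < S" using S[of x0] by linarith
  define K where "K = 32 * pi * S * 2 ^ Suc k"
  let ?X = "\<lambda>\<epsilon>. (12 * c / \<epsilon>) powr (1 / (real k + \<alpha>))"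
  have "0 < K" "0 < real k + \<alpha>" using S0 \<alpha> by (simp_all add: K_def)
  then have "\<forall>\<^sub>F Y in at_top. ln (K * (8192 * Y + 1)) + 2 * h \<le> h * Y"
    and "filterlim ?X at_top (at_right 0)"
    using h c by real_asymp+
  then have "\<forall>\<^sub>F \<epsilon> in at_right 0. ln (K * (8192 * ?X \<epsilon> + 1)) + 2 * h \<le> h * ?X \<epsilon>"
    by (rule eventually_compose_filterlim)
  moreover have "\<forall>\<^sub>F \<epsilon> in at_right 0. \<epsilon> < \<bar>F x0\<bar>" using \<open>0 < \<bar>F x0\<bar>\<close> by real_asymp
  moreover note eventually_at_right_less[of 0]
  ultimately show "\<forall>\<^sub>F \<epsilon> in at_right 0. log 2 (approachability h \<epsilon> F) \<le> 32770 * h * ?X \<epsilon>"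
  proof eventually_elim
    case (elim \<epsilon>)
    have "log 2 (approachability h \<epsilon> ((deriv ^^ 0) F)) \<le> 32770 * h * ?X \<epsilon>"
      by (rule log_approachability_le[where fs = "\<lambda>i. (deriv ^^ i) F" and z = x0, OF h chain \<alpha> c])
        (use H S elim in \<open>simp_all add: K_def\<close>)
    then show ?case by simp
  qed
qed

end
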